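(* Let $F\colon\mathcal M\to\mathcal N$ be a (symmetric) monoidal functor between (symmetric) monoidal categories. If $\mathcal N$ is purely monoidal, then the set $\Theta(F)$ has at most one element. If in addition $\mathcal M$ is a 2-group, then $\Theta(F)$ has exactly one element.
   Context: Monoidal functors are strong monoidal. For a monoidal functor $F\colon\mathcal M\to\mathcal N$, $\Theta(F)$ denotes the set of monoidal natural isomorphisms $F\Rightarrow \Delta_{I_{\mathcal N}}$, where $\Delta_{I_{\mathcal N}}\colon\mathcal M\to\mathcal N$ is the constant (monoidal) functor at the unit object $I_{\mathcal N}$. An object $A$ of a monoidal category is weakly invertible if there is $B$ with $A\otimes B\cong B\otimes A\cong I$. A 2-group is a monoidal category which is a groupoid and in which every object is weakly invertible. A monoidal category is purely monoidal (pure) if for every pair of weakly invertible objects there is exactly one isomorphism between them. *)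

theory Defs
  imports "HOL-Library.FuncSet"
begin

record ('o,'m) cat =
  Obj :: "'o set"
  Hom :: "'o \<Rightarrow> 'o \<Rightarrow> 'm set"
  Id :: "'o \<Rightarrow> 'm"
  Comp :: "'m \<Rightarrow> 'm \<Rightarrow> 'm"   (* Comp C g f = g \<circ> f *)

definition category :: "('o,'m,'z) cat_scheme \<Rightarrow> bool" where
  "category C \<longleftrightarrow>
     (\<forall>a b. (a \<notin> Obj C \<or> b \<notin> Obj C) \<longrightarrow> Hom C a b = {}) \<and>
     (\<forall>a\<in>Obj C. Id C a \<in> Hom C a a) \<and>
     (\<forall>a b c f g. f \<in> Hom C a b \<and> g \<in> Hom C b c \<longrightarrow> Comp C g f \<in> Hom C a c) \<and>
     (\<forall>a b f. f \<in> Hom C a b \<longrightarrow> Comp C f (Id C a) = f \<and> Comp C (Id C b) f = f) \<and>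
     (\<forall>a b c d f g h. f \<in> Hom C a b \<and> g \<in> Hom C b c \<and> h \<in> Hom C c d \<longrightarrow>
        Comp C h (Comp C g f) = Comp C (Comp C h g) f)"

definition iso_in :: "('o,'m,'z) cat_scheme \<Rightarrow> 'o \<Rightarrow> 'o \<Rightarrow> 'm \<Rightarrow> bool" where
  "iso_in C a b f \<longleftrightarrow> f \<in> Hom C a b \<and>
     (\<exists>g\<in>Hom C b a. Comp C g f = Id C a \<and> Comp C f g = Id C b)"

definition isomorphic :: "('o,'m,'z) cat_scheme \<Rightarrow> 'o \<Rightarrow> 'o \<Rightarrow> bool" where
  "isomorphic C a b \<longleftrightarrow> (\<exists>f. iso_in C a b f)"

definition groupoid :: "('o,'m,'z) cat_scheme \<Rightarrow> bool" where
  "groupoid C \<longleftrightarrow> (\<forall>a\<in>Obj C. \<forall>b\<in>Obj C. \<forall>f\<in>Hom C a b. iso_in C a b f)"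

record ('o,'m) moncat = "('o,'m) cat" +
  Tens :: "'o \<Rightarrow> 'o \<Rightarrow> 'o"
  TensM :: "'m \<Rightarrow> 'm \<Rightarrow> 'm"
  Unit :: 'o
  Alpha :: "'o \<Rightarrow> 'o \<Rightarrow> 'o \<Rightarrow> 'm"
  Lam :: "'o \<Rightarrow> 'm"
  Rho :: "'o \<Rightarrow> 'm"

definition monoidal_cat :: "('o,'m) moncat \<Rightarrow> bool" where
  "monoidal_cat M \<longleftrightarrow> category M \<and>
     Unit M \<in> Obj M \<and>
     (\<forall>a\<in>Obj M. \<forall>b\<in>Obj M. Tens M a b \<in> Obj M) \<and>
     (\<forall>a b a' b' f g. f \<in> Hom M a a' \<and> g \<in> Hom M b b' \<longrightarrow>
        TensM M f g \<in> Hom M (Tens M a b) (Tens M a' b')) \<and>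
     (\<forall>a\<in>Obj M. \<forall>b\<in>Obj M. TensM M (Id M a) (Id M b) = Id M (Tens M a b)) \<and>
     (\<forall>a b c a' b' c' f g f' g'. f \<in> Hom M a b \<and> g \<in> Hom M b c \<and>
        f' \<in> Hom M a' b' \<and> g' \<in> Hom M b' c' \<longrightarrow>
        TensM M (Comp M g f) (Comp M g' f') = Comp M (TensM M g g') (TensM M f f')) \<and>
     (\<forall>a\<in>Obj M. \<forall>b\<in>Obj M. \<forall>c\<in>Obj M.
        iso_in M (Tens M (Tens M a b) c) (Tens M a (Tens M b c)) (Alpha M a b c)) \<and>
     (\<forall>a\<in>Obj M. iso_in M (Tens M (Unit M) a) a (Lam M a)) \<and>
     (\<forall>a\<in>Obj M. iso_in M (Tens M a (Unit M)) a (Rho M a)) \<and>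
     (\<forall>a b c a' b' c' f g h. f \<in> Hom M a a' \<and> g \<in> Hom M b b' \<and> h \<in> Hom M c c' \<longrightarrow>
        Comp M (Alpha M a' b' c') (TensM M (TensM M f g) h) =
        Comp M (TensM M f (TensM M g h)) (Alpha M a b c)) \<and>
     (\<forall>a a' f. f \<in> Hom M a a' \<longrightarrow>
        Comp M (Lam M a') (TensM M (Id M (Unit M)) f) = Comp M f (Lam M a)) \<and>
     (\<forall>a a' f. f \<in> Hom M a a' \<longrightarrow>
        Comp M (Rho M a') (TensM M f (Id M (Unit M))) = Comp M f (Rho M a)) \<and>
     (\<forall>a\<in>Obj M. \<forall>b\<in>Obj M. \<forall>c\<in>Obj M. \<forall>d\<in>Obj M.
        Comp M (Alpha M a b (Tens M c d)) (Alpha M (Tens M a b) c d) =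
        Comp M (TensM M (Id M a) (Alpha M b c d))
          (Comp M (Alpha M a (Tens M b c) d) (TensM M (Alpha M a b c) (Id M d)))) \<and>
     (\<forall>a\<in>Obj M. \<forall>b\<in>Obj M.
        Comp M (TensM M (Id M a) (Lam M b)) (Alpha M a (Unit M) b) =
        TensM M (Rho M a) (Id M b))"

definition weakly_invertible :: "('o,'m) moncat \<Rightarrow> 'o \<Rightarrow> bool" where
  "weakly_invertible M a \<longleftrightarrow> a \<in> Obj M \<and>
     (\<exists>b\<in>Obj M. isomorphic M (Tens M a b) (Unit M) \<and> isomorphic M (Tens M b a) (Unit M))"

definition two_group :: "('o,'m) moncat \<Rightarrow> bool" where
  "two_group M \<longleftrightarrow> monoidal_cat M \<and> groupoid M \<and> (\<forall>a\<in>Obj M. weakly_invertible M a)"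

definition purely_monoidal :: "('o,'m) moncat \<Rightarrow> bool" where
  "purely_monoidal M \<longleftrightarrow>
     (\<forall>a b. weakly_invertible M a \<and> weakly_invertible M b \<longrightarrow> (\<exists>!f. iso_in M a b f))"

record ('o,'m,'p,'n) monfun =
  FO :: "'o \<Rightarrow> 'p"
  FM :: "'m \<Rightarrow> 'n"
  Phi :: "'o \<Rightarrow> 'o \<Rightarrow> 'n"
  Phi0 :: "'n"

definition monoidal_functor ::
  "('o,'m) moncat \<Rightarrow> ('p,'n) moncat \<Rightarrow> ('o,'m,'p,'n) monfun \<Rightarrow> bool" where
  "monoidal_functor M N F \<longleftrightarrow>
     (\<forall>a\<in>Obj M. FO F a \<in> Obj N) \<and>
     (\<forall>a b f. f \<in> Hom M a b \<longrightarrow> FM F f \<in> Hom N (FO F a) (FO F b)) \<and>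
     (\<forall>a\<in>Obj M. FM F (Id M a) = Id N (FO F a)) \<and>
     (\<forall>a b c f g. f \<in> Hom M a b \<and> g \<in> Hom M b c \<longrightarrow>
        FM F (Comp M g f) = Comp N (FM F g) (FM F f)) \<and>
     (\<forall>a\<in>Obj M. \<forall>b\<in>Obj M.
        iso_in N (Tens N (FO F a) (FO F b)) (FO F (Tens M a b)) (Phi F a b)) \<and>
     iso_in N (Unit N) (FO F (Unit M)) (Phi0 F) \<and>
     (\<forall>a b a' b' f g. f \<in> Hom M a a' \<and> g \<in> Hom M b b' \<longrightarrow>
        Comp N (Phi F a' b') (TensM N (FM F f) (FM F g)) =
        Comp N (FM F (TensM M f g)) (Phi F a b)) \<and>
     (\<forall>a\<in>Obj M. \<forall>b\<in>Obj M. \<forall>c\<in>Obj M.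
        Comp N (FM F (Alpha M a b c))
          (Comp N (Phi F (Tens M a b) c) (TensM N (Phi F a b) (Id N (FO F c)))) =
        Comp N (Phi F a (Tens M b c))
          (Comp N (TensM N (Id N (FO F a)) (Phi F b c)) (Alpha N (FO F a) (FO F b) (FO F c)))) \<and>
     (\<forall>a\<in>Obj M.
        Comp N (FM F (Lam M a))
          (Comp N (Phi F (Unit M) a) (TensM N (Phi0 F) (Id N (FO F a)))) = Lam N (FO F a)) \<and>
     (\<forall>a\<in>Obj M.
        Comp N (FM F (Rho M a))
          (Comp N (Phi F a (Unit M)) (TensM N (Id N (FO F a)) (Phi0 F))) = Rho N (FO F a))"

definition const_unit_functor :: "('p,'n) moncat \<Rightarrow> ('o,'m,'p,'n) monfun" where
  "const_unit_functor N =
     \<lparr>FO = (\<lambda>_. Unit N), FM = (\<lambda>_. Id N (Unit N)),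
      Phi = (\<lambda>_ _. Lam N (Unit N)), Phi0 = Id N (Unit N)\<rparr>"

definition monoidal_nat_iso ::
  "('o,'m) moncat \<Rightarrow> ('p,'n) moncat \<Rightarrow> ('o,'m,'p,'n) monfun \<Rightarrow> ('o,'m,'p,'n) monfun
     \<Rightarrow> ('o \<Rightarrow> 'n) \<Rightarrow> bool" where
  "monoidal_nat_iso M N F G \<theta> \<longleftrightarrow>
     \<theta> \<in> extensional (Obj M) \<and>
     (\<forall>a\<in>Obj M. iso_in N (FO F a) (FO G a) (\<theta> a)) \<and>
     (\<forall>a b f. f \<in> Hom M a b \<longrightarrow> Comp N (\<theta> b) (FM F f) = Comp N (FM G f) (\<theta> a)) \<and>
     (\<forall>a\<in>Obj M. \<forall>b\<in>Obj M.
        Comp N (\<theta> (Tens M a b)) (Phi F a b) = Comp N (Phi G a b) (TensM N (\<theta> a) (\<theta> b))) \<and>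
     Comp N (\<theta> (Unit M)) (Phi0 F) = Phi0 G"

definition Theta ::
  "('o,'m) moncat \<Rightarrow> ('p,'n) moncat \<Rightarrow> ('o,'m,'p,'n) monfun \<Rightarrow> ('o \<Rightarrow> 'n) set" where
  "Theta M N F = {\<theta>. monoidal_nat_iso M N F (const_unit_functor N) \<theta>}"

end

theory Submission
  imports Defs
begin

text \<open>In a purely monoidal category any two isomorphisms from an object to \<open>I\<close> coincide, since
  such an object is weakly invertible. The components of an element of \<open>\<Theta>(F)\<close> are isomorphisms
  \<open>F a \<rightarrow> I\<close>, hence they are forced. If \<open>M\<close> is a 2-group, each \<open>F a\<close> is weakly invertible, so
  the unique isomorphisms \<open>F a \<rightarrow> I\<close> exist; every naturality and monoidality equation for them
  compares two isomorphisms into \<open>I\<close> (for naturality because \<open>F f\<close> is invertible in the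
  groupoid \<open>M\<close>) and therefore holds by purity.\<close>

lemma category_hom_objs:
  "category C \<Longrightarrow> f \<in> Hom C a b \<Longrightarrow> a \<in> Obj C \<and> b \<in> Obj C"
  unfolding category_def by (elim conjE) blast

lemma category_id_hom: "category C \<Longrightarrow> a \<in> Obj C \<Longrightarrow> Id C a \<in> Hom C a a"
  unfolding category_def by (elim conjE) blast

lemma category_comp_hom:
  "category C \<Longrightarrow> f \<in> Hom C a b \<Longrightarrow> g \<in> Hom C b c \<Longrightarrow> Comp C g f \<in> Hom C a c"
  unfolding category_def by (elim conjE) blast

lemma category_comp_id_left: "category C \<Longrightarrow> f \<in> Hom C a b \<Longrightarrow> Comp C (Id C b) f = f"
  unfolding category_def by (elim conjE) blast

lemma category_comp_assoc:
  "category C \<Longrightarrow> f \<in> Hom C a b \<Longrightarrow> g \<in> Hom C b c \<Longrightarrow> h \<in> Hom C c d \<Longrightarrow>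
    Comp C h (Comp C g f) = Comp C (Comp C h g) f"
  unfolding category_def by (elim conjE) blast

lemma iso_in_hom: "iso_in C a b f \<Longrightarrow> f \<in> Hom C a b"
  unfolding iso_in_def by blast

lemma iso_in_objs: "category C \<Longrightarrow> iso_in C a b f \<Longrightarrow> a \<in> Obj C \<and> b \<in> Obj C"
  using category_hom_objs iso_in_hom by metis

lemma iso_in_sym: "iso_in C a b f \<Longrightarrow> \<exists>g. iso_in C b a g"
  unfolding iso_in_def by blast

lemma iso_in_id: "category C \<Longrightarrow> a \<in> Obj C \<Longrightarrow> iso_in C a a (Id C a)"
  unfolding iso_in_def by (metis category_id_hom category_comp_id_left)

lemma iso_in_comp:
  assumes C: "category C" and "iso_in C a b f" and "iso_in C b c g"
  shows "iso_in C a c (Comp C g f)"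
proof -
  obtain f' where f: "f \<in> Hom C a b" "f' \<in> Hom C b a" and
    ff': "Comp C f' f = Id C a" "Comp C f f' = Id C b"
    using \<open>iso_in C a b f\<close> unfolding iso_in_def by blast
  obtain g' where g: "g \<in> Hom C b c" "g' \<in> Hom C c b" and
    gg': "Comp C g' g = Id C b" "Comp C g g' = Id C c"
    using \<open>iso_in C b c g\<close> unfolding iso_in_def by blast
  have gf: "Comp C g f \<in> Hom C a c" by (rule category_comp_hom[OF C f(1) g(1)])
  have f'g': "Comp C f' g' \<in> Hom C c a" by (rule category_comp_hom[OF C g(2) f(2)])
  have "Comp C (Comp C f' g') (Comp C g f) = Comp C f' (Comp C g' (Comp C g f))"
    using category_comp_assoc[OF C gf g(2) f(2)] by simp
  also have "Comp C g' (Comp C g f) = f"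
    using category_comp_assoc[OF C f(1) g] gg' category_comp_id_left[OF C f(1)] by simp
  finally have left: "Comp C (Comp C f' g') (Comp C g f) = Id C a"
    using ff' by simp
  have "Comp C (Comp C g f) (Comp C f' g') = Comp C g (Comp C f (Comp C f' g'))"
    using category_comp_assoc[OF C f'g' f(1) g(1)] by simp
  also have "Comp C f (Comp C f' g') = g'"
    using category_comp_assoc[OF C g(2) f(2,1)] ff' category_comp_id_left[OF C g(2)] by simp
  finally have right: "Comp C (Comp C g f) (Comp C f' g') = Id C c"
    using gg' by simp
  show ?thesis
    unfolding iso_in_def using gf f'g' left right by blast
qed

lemma monoidal_cat_category: "monoidal_cat M \<Longrightarrow> category M"
  unfolding monoidal_cat_def by (elim conjE) blast

lemma monoidal_cat_unit_obj: "monoidal_cat M \<Longrightarrow> Unit M \<in> Obj M"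
  unfolding monoidal_cat_def by (elim conjE) blast

lemma monoidal_cat_tens_obj:
  "monoidal_cat M \<Longrightarrow> a \<in> Obj M \<Longrightarrow> b \<in> Obj M \<Longrightarrow> Tens M a b \<in> Obj M"
  unfolding monoidal_cat_def by (elim conjE) blast

lemma monoidal_cat_tensM_hom:
  "monoidal_cat M \<Longrightarrow> f \<in> Hom M a a' \<Longrightarrow> g \<in> Hom M b b' \<Longrightarrow>
    TensM M f g \<in> Hom M (Tens M a b) (Tens M a' b')"
  unfolding monoidal_cat_def by (elim conjE) blast

lemma monoidal_cat_tensM_id:
  "monoidal_cat M \<Longrightarrow> a \<in> Obj M \<Longrightarrow> b \<in> Obj M \<Longrightarrow>
    TensM M (Id M a) (Id M b) = Id M (Tens M a b)"
  unfolding monoidal_cat_def by (elim conjE) blast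

lemma monoidal_cat_tensM_comp:
  "monoidal_cat M \<Longrightarrow> f \<in> Hom M a b \<Longrightarrow> g \<in> Hom M b c \<Longrightarrow>
    f' \<in> Hom M a' b' \<Longrightarrow> g' \<in> Hom M b' c' \<Longrightarrow>
    TensM M (Comp M g f) (Comp M g' f') = Comp M (TensM M g g') (TensM M f f')"
  unfolding monoidal_cat_def by (elim conjE) blast

lemma monoidal_cat_lam_iso:
  "monoidal_cat M \<Longrightarrow> a \<in> Obj M \<Longrightarrow> iso_in M (Tens M (Unit M) a) a (Lam M a)"
  unfolding monoidal_cat_def by (elim conjE) fast

lemma monoidal_cat_rho_iso:
  "monoidal_cat M \<Longrightarrow> a \<in> Obj M \<Longrightarrow> iso_in M (Tens M a (Unit M)) a (Rho M a)"
  unfolding monoidal_cat_def by (elim conjE) fast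

lemma iso_in_tensM:
  assumes M: "monoidal_cat M" and "iso_in M a a' f" and "iso_in M b b' g"
  shows "iso_in M (Tens M a b) (Tens M a' b') (TensM M f g)"
proof -
  obtain f' where f: "f \<in> Hom M a a'" "f' \<in> Hom M a' a" and
    ff': "Comp M f' f = Id M a" "Comp M f f' = Id M a'"
    using \<open>iso_in M a a' f\<close> unfolding iso_in_def by blast
  obtain g' where g: "g \<in> Hom M b b'" "g' \<in> Hom M b' b" and
    gg': "Comp M g' g = Id M b" "Comp M g g' = Id M b'"
    using \<open>iso_in M b b' g\<close> unfolding iso_in_def by blast
  have objs: "a \<in> Obj M" "a' \<in> Obj M" "b \<in> Obj M" "b' \<in> Obj M"
    using f g M by (meson category_hom_objs monoidal_cat_category)+
  have "Comp M (TensM M f' g') (TensM M f g) = Id M (Tens M a b)"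
    using monoidal_cat_tensM_comp[OF M f(1,2) g(1,2)] ff' gg' monoidal_cat_tensM_id[OF M] objs
    by simp
  moreover have "Comp M (TensM M f g) (TensM M f' g') = Id M (Tens M a' b')"
    using monoidal_cat_tensM_comp[OF M f(2,1) g(2,1)] ff' gg' monoidal_cat_tensM_id[OF M] objs
    by simp
  ultimately show ?thesis
    unfolding iso_in_def using f g by (blast intro: monoidal_cat_tensM_hom[OF M])
qed

lemma monoidal_functor_FO_obj: "monoidal_functor M N F \<Longrightarrow> a \<in> Obj M \<Longrightarrow> FO F a \<in> Obj N"
  unfolding monoidal_functor_def by (elim conjE) blast

lemma monoidal_functor_FM_hom:
  "monoidal_functor M N F \<Longrightarrow> f \<in> Hom M a b \<Longrightarrow> FM F f \<in> Hom N (FO F a) (FO F b)"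
  unfolding monoidal_functor_def by (elim conjE) blast

lemma monoidal_functor_FM_id:
  "monoidal_functor M N F \<Longrightarrow> a \<in> Obj M \<Longrightarrow> FM F (Id M a) = Id N (FO F a)"
  unfolding monoidal_functor_def by (elim conjE) blast

lemma monoidal_functor_FM_comp:
  "monoidal_functor M N F \<Longrightarrow> f \<in> Hom M a b \<Longrightarrow> g \<in> Hom M b c \<Longrightarrow>
    FM F (Comp M g f) = Comp N (FM F g) (FM F f)"
  unfolding monoidal_functor_def by (elim conjE) blast

lemma monoidal_functor_Phi_iso:
  "monoidal_functor M N F \<Longrightarrow> a \<in> Obj M \<Longrightarrow> b \<in> Obj M \<Longrightarrow>
    iso_in N (Tens N (FO F a) (FO F b)) (FO F (Tens M a b)) (Phi F a b)"
  unfolding monoidal_functor_def by (elim conjE) blast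

lemma monoidal_functor_Phi0_iso:
  "monoidal_functor M N F \<Longrightarrow> iso_in N (Unit N) (FO F (Unit M)) (Phi0 F)"
  unfolding monoidal_functor_def by (elim conjE) blast

lemma iso_in_FM:
  assumes M: "category M" and F: "monoidal_functor M N F" and "iso_in M a b f"
  shows "iso_in N (FO F a) (FO F b) (FM F f)"
proof -
  obtain f' where f: "f \<in> Hom M a b" "f' \<in> Hom M b a" and
    ff': "Comp M f' f = Id M a" "Comp M f f' = Id M b"
    using \<open>iso_in M a b f\<close> unfolding iso_in_def by blast
  have objs: "a \<in> Obj M" "b \<in> Obj M"
    using category_hom_objs[OF M f(1)] by auto
  have "Comp N (FM F f') (FM F f) = Id N (FO F a)"
    using monoidal_functor_FM_comp[OF F f] ff' monoidal_functor_FM_id[OF F objs(1)] by simp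
  moreover have "Comp N (FM F f) (FM F f') = Id N (FO F b)"
    using monoidal_functor_FM_comp[OF F f(2,1)] ff' monoidal_functor_FM_id[OF F objs(2)] by simp
  ultimately show ?thesis
    unfolding iso_in_def using f by (blast intro: monoidal_functor_FM_hom[OF F])
qed

lemma const_unit_functor_simps [simp]:
  "FO (const_unit_functor N) a = Unit N"
  "FM (const_unit_functor N) f = Id N (Unit N)"
  "Phi (const_unit_functor N) a b = Lam N (Unit N)"
  "Phi0 (const_unit_functor N) = Id N (Unit N)"
  by (simp_all add: const_unit_functor_def)

lemma weakly_invertible_if_iso_to_unit:
  assumes N: "monoidal_cat N" and f: "iso_in N X (Unit N) f"
  shows "weakly_invertible N X"
proof -
  have X: "X \<in> Obj N"
    using iso_in_objs[OF monoidal_cat_category[OF N] f] by blast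
  have "iso_in N (Tens N X (Unit N)) (Unit N) (Comp N f (Rho N X))"
    by (rule iso_in_comp[OF monoidal_cat_category[OF N] monoidal_cat_rho_iso[OF N X] f])
  moreover have "iso_in N (Tens N (Unit N) X) (Unit N) (Comp N f (Lam N X))"
    by (rule iso_in_comp[OF monoidal_cat_category[OF N] monoidal_cat_lam_iso[OF N X] f])
  ultimately show ?thesis
    unfolding weakly_invertible_def isomorphic_def using X monoidal_cat_unit_obj[OF N] by blast
qed

lemma weakly_invertible_unit: "monoidal_cat N \<Longrightarrow> weakly_invertible N (Unit N)"
  by (meson iso_in_id monoidal_cat_category monoidal_cat_unit_obj
      weakly_invertible_if_iso_to_unit)

lemma monoidal_functor_weakly_invertible:
  assumes M: "monoidal_cat M" and N: "monoidal_cat N" and F: "monoidal_functor M N F"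
    and a: "weakly_invertible M a"
  shows "weakly_invertible N (FO F a)"
proof -
  obtain b g1 g2 where b: "b \<in> Obj M" and a: "a \<in> Obj M"
    and g1: "iso_in M (Tens M a b) (Unit M) g1" and g2: "iso_in M (Tens M b a) (Unit M) g2"
    using a unfolding weakly_invertible_def isomorphic_def by blast
  obtain h where h: "iso_in N (FO F (Unit M)) (Unit N) h"
    using iso_in_sym[OF monoidal_functor_Phi0_iso[OF F]] by blast
  have to_unit: "iso_in N (Tens N (FO F x) (FO F y)) (Unit N)
      (Comp N h (Comp N (FM F g) (Phi F x y)))"
    if "x \<in> Obj M" "y \<in> Obj M" "iso_in M (Tens M x y) (Unit M) g" for x y g
    using iso_in_comp[OF monoidal_cat_category[OF N] monoidal_functor_Phi_iso[OF F that(1,2)]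
        iso_in_FM[OF monoidal_cat_category[OF M] F that(3)]]
    by (rule iso_in_comp[OF monoidal_cat_category[OF N] _ h])
  show ?thesis
    unfolding weakly_invertible_def isomorphic_def
    using to_unit[OF a b g1] to_unit[OF b a g2] a b monoidal_functor_FO_obj[OF F] by blast
qed

lemma purely_monoidal_iso_to_unit_unique:
  assumes N: "monoidal_cat N" and "purely_monoidal N"
    and f: "iso_in N X (Unit N) f" and g: "iso_in N X (Unit N) g"
  shows "f = g"
proof -
  have "\<exists>!h. iso_in N X (Unit N) h"
    using \<open>purely_monoidal N\<close> weakly_invertible_if_iso_to_unit[OF N f] weakly_invertible_unit[OF N]
    unfolding purely_monoidal_def by blast
  then show ?thesis using f g by blast
qed

definition iso_to_unit :: "('p,'n) moncat \<Rightarrow> 'p \<Rightarrow> 'n" where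
  "iso_to_unit N X = (THE f. iso_in N X (Unit N) f)"

lemma iso_in_iso_to_unit:
  assumes N: "monoidal_cat N" and P: "purely_monoidal N" and X: "weakly_invertible N X"
  shows "iso_in N X (Unit N) (iso_to_unit N X)"
proof -
  have "\<exists>!f. iso_in N X (Unit N) f"
    using P X weakly_invertible_unit[OF N] unfolding purely_monoidal_def by blast
  then show ?thesis
    unfolding iso_to_unit_def by (rule theI')
qed

lemma Theta_extensional: "\<theta> \<in> Theta M N F \<Longrightarrow> \<theta> \<in> extensional (Obj M)"
  unfolding Theta_def monoidal_nat_iso_def by blast

lemma Theta_iso_to_unit:
  "\<theta> \<in> Theta M N F \<Longrightarrow> a \<in> Obj M \<Longrightarrow> iso_in N (FO F a) (Unit N) (\<theta> a)"
  unfolding Theta_def monoidal_nat_iso_def by simp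

lemma Theta_unique:
  assumes N: "monoidal_cat N" and P: "purely_monoidal N"
    and \<theta>1: "\<theta>1 \<in> Theta M N F" and \<theta>2: "\<theta>2 \<in> Theta M N F"
  shows "\<theta>1 = \<theta>2"
proof (rule extensionalityI[OF Theta_extensional[OF \<theta>1] Theta_extensional[OF \<theta>2]])
  fix a assume "a \<in> Obj M"
  then show "\<theta>1 a = \<theta>2 a"
    using purely_monoidal_iso_to_unit_unique[OF N P] Theta_iso_to_unit[OF \<theta>1] Theta_iso_to_unit[OF \<theta>2]
    by blast
qed

lemma restrict_iso_to_unit_in_Theta:
  assumes M: "two_group M" and N: "monoidal_cat N" and F: "monoidal_functor M N F"
    and P: "purely_monoidal N"
  shows "restrict (\<lambda>a. iso_to_unit N (FO F a)) (Obj M) \<in> Theta M N F"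
    (is "?\<theta> \<in> _")
proof -
  have M_cat: "monoidal_cat M" "category M" and gpd: "groupoid M"
    using M by (auto simp: two_group_def monoidal_cat_category)
  have cat: "category N" by (rule monoidal_cat_category[OF N])
  have \<theta>: "iso_in N (FO F a) (Unit N) (?\<theta> a)" if "a \<in> Obj M" for a
    using that M iso_in_iso_to_unit[OF N P] monoidal_functor_weakly_invertible[OF M_cat(1) N F]
    by (simp add: two_group_def)
  note unique = purely_monoidal_iso_to_unit_unique[OF N P]
  have naturality: "Comp N (?\<theta> b) (FM F f) = Comp N (Id N (Unit N)) (?\<theta> a)"
    if f: "f \<in> Hom M a b" for a b f
  proof -
    have objs: "a \<in> Obj M" "b \<in> Obj M"
      using category_hom_objs[OF M_cat(2) f] by auto
    have "iso_in M a b f" using gpd objs f unfolding groupoid_def by blast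
    then have "iso_in N (FO F a) (Unit N) (Comp N (?\<theta> b) (FM F f))"
      using iso_in_comp[OF cat iso_in_FM[OF M_cat(2) F] \<theta>[OF objs(2)]] by blast
    then show ?thesis
      using unique \<theta>[OF objs(1)] category_comp_id_left[OF cat iso_in_hom] by metis
  qed
  have tensor: "Comp N (?\<theta> (Tens M a b)) (Phi F a b)
      = Comp N (Lam N (Unit N)) (TensM N (?\<theta> a) (?\<theta> b))"
    if a: "a \<in> Obj M" and b: "b \<in> Obj M" for a b
  proof (rule unique)
    show "iso_in N (Tens N (FO F a) (FO F b)) (Unit N) (Comp N (?\<theta> (Tens M a b)) (Phi F a b))"
      using iso_in_comp[OF cat monoidal_functor_Phi_iso[OF F a b]]
        \<theta>[OF monoidal_cat_tens_obj[OF M_cat(1) a b]] by blast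
    show "iso_in N (Tens N (FO F a) (FO F b)) (Unit N)
        (Comp N (Lam N (Unit N)) (TensM N (?\<theta> a) (?\<theta> b)))"
      using iso_in_comp[OF cat iso_in_tensM[OF N \<theta>[OF a] \<theta>[OF b]]]
        monoidal_cat_lam_iso[OF N monoidal_cat_unit_obj[OF N]] by blast
  qed
  have unit: "Comp N (?\<theta> (Unit M)) (Phi0 F) = Id N (Unit N)"
  proof (rule unique)
    show "iso_in N (Unit N) (Unit N) (Comp N (?\<theta> (Unit M)) (Phi0 F))"
      using iso_in_comp[OF cat monoidal_functor_Phi0_iso[OF F]]
        \<theta>[OF monoidal_cat_unit_obj[OF M_cat(1)]] by blast
    show "iso_in N (Unit N) (Unit N) (Id N (Unit N))"
      by (rule iso_in_id[OF cat monoidal_cat_unit_obj[OF N]])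
  qed
  show ?thesis
    unfolding Theta_def monoidal_nat_iso_def
    using \<theta> naturality tensor unit by simp
qed

theorem lemma6p1:
  fixes M :: "('o,'m) moncat" and N :: "('p,'n) moncat" and F :: "('o,'m,'p,'n) monfun"
  assumes "monoidal_cat M" and "monoidal_cat N" and "monoidal_functor M N F"
    and "purely_monoidal N"
  shows "(\<forall>\<theta>1\<in>Theta M N F. \<forall>\<theta>2\<in>Theta M N F. \<theta>1 = \<theta>2) \<and>
         (two_group M \<longrightarrow> (\<exists>!\<theta>. \<theta> \<in> Theta M N F))"
  using Theta_unique[OF assms(2,4)] restrict_iso_to_unit_in_Theta[OF _ assms(2-4)] by blast

end
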